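(* Let $L\ge2$, $D\ge 1$ be integers and for $k\in\mathbb{R}$ let \[ \operatorname{ELB}(k;L,D)=\log\left(L-1+\exp\left(2D^{k-\frac12}\right)\right)-\frac{2D^{k-\frac12}\exp\left(2D^{k-\frac12}\right)}{L-1+\exp\left(2D^{k-\frac12}\right)}. \] Then $\operatorname{ELB}(k;L,D)$ is a monotonically decreasing function of $k$, and it is bounded between $0$ and $\log L$.
   Context: $\log$ is the natural logarithm. (The proof treats $D>1$ implicitly so that $D^{k-1/2}$ is increasing in $k$.) *)

theory Defs imports Complex_Main begin

definition ELB :: "real \<Rightarrow> nat \<Rightarrow> nat \<Rightarrow> real" where
  "ELB k L D =
     ln (real L - 1 + exp (2 * real D powr (k - 1/2)))
     - (2 * real D powr (k - 1/2) * exp (2 * real D powr (k - 1/2)))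
       / (real L - 1 + exp (2 * real D powr (k - 1/2)))"

end

theory Submission imports Defs begin

text \<open>
  ELB is the entropy of the softmax distribution with one logit \<open>x = 2 D powr (k - 1/2)\<close>
  and \<open>c = L - 1\<close> logits equal to 0. Its derivative in \<open>x\<close> is \<open>-c x e^x / (c + e^x)^2\<close>,
  which is nonpositive for \<open>x \<ge> 0\<close>; since \<open>x \<ge> 0\<close> grows with \<open>k\<close> when \<open>D \<ge> 1\<close>, ELB
  decreases in \<open>k\<close>. The upper bound is the value \<open>ln (c + 1) = ln L\<close> at \<open>x = 0\<close>, and the
  lower bound follows from \<open>ln (c + e^x) - x e^x / (c + e^x) = ln (1 + c e^-x) + c x / (c + e^x)\<close>.
\<close>

definition softmax_entropy :: "real \<Rightarrow> real \<Rightarrow> real" where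
  "softmax_entropy c x = ln (c + exp x) - x * exp x / (c + exp x)"

lemma ELB_eq_softmax_entropy: "ELB k L D = softmax_entropy (real L - 1) (2 * real D powr (k - 1/2))"
  unfolding ELB_def softmax_entropy_def by simp

lemma softmax_entropy_at_0: "softmax_entropy c 0 = ln (c + 1)"
  unfolding softmax_entropy_def by simp

lemma has_real_derivative_softmax_entropy:
  assumes "c \<ge> 0"
  shows "(softmax_entropy c has_real_derivative - c * x * exp x / (c + exp x)\<^sup>2) (at x)"
proof -
  have pos: "c + exp x > 0"
    using assms by (simp add: add_nonneg_pos)
  have "(softmax_entropy c has_real_derivative
      exp x / (c + exp x) - ((exp x + x * exp x) * (c + exp x) - x * exp x * exp x) / (c + exp x)\<^sup>2) (at x)"
    unfolding softmax_entropy_def using pos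
    by (auto intro!: derivative_eq_intros simp: power2_eq_square)
  also have "exp x / (c + exp x) - ((exp x + x * exp x) * (c + exp x) - x * exp x * exp x) / (c + exp x)\<^sup>2
      = - c * x * exp x / (c + exp x)\<^sup>2"
    using pos by (simp add: divide_simps) (simp add: algebra_simps power2_eq_square)
  finally show ?thesis .
qed

lemma softmax_entropy_antimono:
  assumes "c \<ge> 0" "0 \<le> a" "a \<le> b"
  shows "softmax_entropy c b \<le> softmax_entropy c a"
proof (rule DERIV_nonpos_imp_nonincreasing[OF \<open>a \<le> b\<close>])
  fix x assume "a \<le> x"
  with assms have "- c * x * exp x / (c + exp x)\<^sup>2 \<le> 0"
    by (intro divide_nonpos_nonneg) auto
  then show "\<exists>y. (softmax_entropy c has_real_derivative y) (at x) \<and> y \<le> 0"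
    using has_real_derivative_softmax_entropy[OF \<open>c \<ge> 0\<close>] by blast
qed

lemma softmax_entropy_nonneg:
  assumes "c \<ge> 0" "0 \<le> x"
  shows "0 \<le> softmax_entropy c x"
proof -
  have pos: "c + exp x > 0"
    using assms by (simp add: add_nonneg_pos)
  have "c + exp x = exp x * (1 + c * exp (-x))"
    by (simp add: field_simps exp_minus)
  moreover have "1 + c * exp (-x) > 0"
    using assms by (simp add: add_pos_nonneg)
  ultimately have "ln (c + exp x) = x + ln (1 + c * exp (-x))"
    by (simp add: ln_mult)
  moreover have "x - x * exp x / (c + exp x) = c * x / (c + exp x)"
    using pos by (simp add: field_simps)
  moreover have "0 \<le> ln (1 + c * exp (-x))" "0 \<le> c * x / (c + exp x)"
    using assms pos by simp_all
  ultimately show ?thesis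
    unfolding softmax_entropy_def by linarith
qed

theorem mainTheorem3:
  fixes L D :: nat
  assumes "L \<ge> 2" and "D \<ge> 1"
  shows "antimono (\<lambda>k. ELB k L D) \<and> (\<forall>k. 0 \<le> ELB k L D \<and> ELB k L D \<le> ln (real L))"
proof -
  have c: "real L - 1 \<ge> 0"
    using assms by simp
  have x_nonneg: "0 \<le> 2 * real D powr (k - 1/2)" for k
    by simp
  have "antimono (\<lambda>k. ELB k L D)"
  proof
    fix a b :: real assume "a \<le> b"
    then have "real D powr (a - 1/2) \<le> real D powr (b - 1/2)"
      using assms by (intro powr_mono) auto
    then show "ELB b L D \<le> ELB a L D"
      unfolding ELB_eq_softmax_entropy by (intro softmax_entropy_antimono[OF c x_nonneg]) simp
  qed
  moreover have "0 \<le> ELB k L D" for k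
    unfolding ELB_eq_softmax_entropy by (rule softmax_entropy_nonneg[OF c x_nonneg])
  moreover have "ELB k L D \<le> ln (real L)" for k
    using softmax_entropy_antimono[OF c order_refl x_nonneg, of k]
    unfolding ELB_eq_softmax_entropy softmax_entropy_at_0 by simp
  ultimately show ?thesis by blast
qed

end
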